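(* For all (possibly partial) Boolean functions $f$ and $g$, $\lambda(f\circ g)=\lambda(f)\lambda(g)$.
   Context: For a partial function $h$ with domain $\mathrm{Dom}(h)\subseteq\{0,1\}^k$, the sensitivity graph $G_h$ has vertex set $\mathrm{Dom}(h)$ and an edge between $x,y$ iff they differ in exactly one coordinate and $h(x)\ne h(y)$; $\lambda(h)$ is the spectral norm of its adjacency matrix. If $f$ has $n$ input bits and $g$ has $m$, then $f\circ g$ is the partial function on $\{0,1\}^{nm}$, with input written $x=x^{(1)}\cdots x^{(n)}$, $x^{(i)}\in\{0,1\}^m$, defined on those $x$ with each $x^{(i)}\in\mathrm{Dom}(g)$ and $(g(x^{(1)}),\dots,g(x^{(n)}))\in\mathrm{Dom}(f)$, by $(f\circ g)(x)=f(g(x^{(1)}),\dots,g(x^{(n)}))$. *)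

theory Defs
  imports Complex_Main
begin

text \<open>A partial Boolean function on k input bits is modelled as
  h :: bool list => bool option together with the arity k;
  its domain consists of the bit strings of length k on which h is defined.\<close>

type_synonym pbf = "bool list \<Rightarrow> bool option"

definition pdom :: "nat \<Rightarrow> pbf \<Rightarrow> bool list set" where
  "pdom k h = {x. length x = k \<and> h x \<noteq> None}"

definition hdist1 :: "bool list \<Rightarrow> bool list \<Rightarrow> bool" where
  "hdist1 x y \<longleftrightarrow> length x = length y \<and> card {i. i < length x \<and> x ! i \<noteq> y ! i} = 1"

definition sens_edge :: "nat \<Rightarrow> pbf \<Rightarrow> bool list \<Rightarrow> bool list \<Rightarrow> bool" where
  "sens_edge k h x y \<longleftrightarrow> x \<in> pdom k h \<and> y \<in> pdom k h \<and> hdist1 x y \<and> h x \<noteq> h y"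

text \<open>Spectral norm (operator 2-norm) of the adjacency matrix A of G_h:
  sup of ||A v||_2 over vectors v on the vertex set with ||v||_2 \<le> 1.\<close>
definition sens_lambda :: "nat \<Rightarrow> pbf \<Rightarrow> real" where
  "sens_lambda k h = Sup {sqrt (\<Sum>y\<in>pdom k h. (\<Sum>x\<in>pdom k h. (if sens_edge k h y x then 1 else 0) * v x)\<^sup>2)
     | v :: bool list \<Rightarrow> real. (\<Sum>x\<in>pdom k h. (v x)\<^sup>2) \<le> 1}"

definition blk :: "nat \<Rightarrow> bool list \<Rightarrow> nat \<Rightarrow> bool list" where
  "blk m x i = take m (drop (i * m) x)"

definition pcomp :: "nat \<Rightarrow> nat \<Rightarrow> pbf \<Rightarrow> pbf \<Rightarrow> pbf" where
  "pcomp n m f g x =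
     (if length x = n * m \<and> (\<forall>i<n. blk m x i \<in> pdom m g)
      then f (map (\<lambda>i. the (g (blk m x i))) [0..<n]) else None)"

end

theory Submission
  imports Defs "HOL-Analysis.L2_Norm"
begin

text \<open>
  The spectral norm \<open>\<lambda>(h)\<close> is the least \<open>M \<ge> 0\<close> with \<open>\<langle>u, A\<^sub>h v\<rangle> \<le> M \<parallel>u\<parallel> \<parallel>v\<parallel>\<close> for all \<open>u, v\<close>.
  An edge of the sensitivity graph of \<open>f \<circ> g\<close> changes a single block \<open>x\<^bsup>(i)\<^esup>\<close> along an edge
  of \<open>G\<^sub>g\<close>, and thereby flips bit \<open>i\<close> of the inner vector
  \<open>z = (g(x\<^bsup>(1)\<^esup>), \<dots>, g(x\<^bsup>(n)\<^esup>))\<close> along an edge of \<open>G\<^sub>f\<close>.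

  Upper bound: group the inputs by \<open>z\<close> and, inside a fibre, by all blocks but the \<open>i\<close>-th.
  Each such slice is a copy of a level set of \<open>g\<close>, so the form of \<open>f \<circ> g\<close> is a form of \<open>f\<close>
  whose entries are bounded by \<open>\<lambda>(g)\<close> times norms of slices; Cauchy-Schwarz and the bound
  for \<open>f\<close> give \<open>\<lambda>(f) \<lambda>(g)\<close>.

  Lower bound: for \<open>w\<close> on \<open>dom g\<close> of unit norm on both level sets of \<open>g\<close>, the vectors
  \<open>p(z) \<Prod>\<^sub>j w(x\<^bsup>(j)\<^esup>)\<close> have the norm of \<open>p\<close>, and the form of \<open>f \<circ> g\<close> on them is the form
  of \<open>f\<close> times the cross term \<open>\<Sum>\<^bsub>g(a) = c\<^esub> w(a) \<Sum>\<^bsub>b \<sim> a\<^esub> w(b)\<close>, which does not depend on \<open>c\<close>.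
  Splitting the form of \<open>g\<close> by the value at the first endpoint and building \<open>w\<close> from \<open>u\<close> and
  \<open>v\<close> on the two level sets gives \<open>\<lambda>(f) \<lambda>(g) \<le> \<lambda>(f \<circ> g)\<close>.
\<close>

lemma L2_set_sq: "(L2_set f A)\<^sup>2 = (\<Sum>i\<in>A. (f i)\<^sup>2)"
  unfolding L2_set_def by (simp add: sum_nonneg)

lemma L2_set_cong_power2:
  "(\<And>x. x \<in> A \<Longrightarrow> (f x)\<^sup>2 = (g x)\<^sup>2) \<Longrightarrow> L2_set f A = L2_set g A"
  unfolding L2_set_def by (intro arg_cong[where f = sqrt] sum.cong) auto

lemma L2_set_divide_self: "L2_set f A \<noteq> 0 \<Longrightarrow> L2_set (\<lambda>x. f x / L2_set f A) A = 1"
  using L2_set_left_distrib[of "1 / L2_set f A" f A] by simp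

lemma sum_mult_le_L2_set: "(\<Sum>i\<in>A. f i * g i) \<le> L2_set f A * L2_set g A"
proof -
  have "(\<Sum>i\<in>A. f i * g i) \<le> (\<Sum>i\<in>A. \<bar>f i\<bar> * \<bar>g i\<bar>)"
    by (rule sum_mono) (simp flip: abs_mult)
  also have "\<dots> \<le> L2_set f A * L2_set g A"
    by (rule L2_set_mult_ineq)
  finally show ?thesis .
qed

lemma L2_set_subset_le: "finite B \<Longrightarrow> A \<subseteq> B \<Longrightarrow> L2_set f A \<le> L2_set f B"
  unfolding L2_set_def by (intro real_sqrt_le_mono sum_mono2) auto

lemma L2_set_group:
  assumes "finite A" "finite C" "k ` A \<subseteq> C"
  shows "L2_set (\<lambda>c. L2_set f {x\<in>A. k x = c}) C = L2_set f A"
proof -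
  have "(\<Sum>c\<in>C. (L2_set f {x\<in>A. k x = c})\<^sup>2) = (\<Sum>x\<in>A. (f x)\<^sup>2)"
    unfolding L2_set_sq using sum.group[OF assms] by simp
  then show ?thesis
    by (simp add: L2_set_def)
qed

lemma sum_if_mem_image:
  assumes "finite D" "inj_on \<phi> D"
  shows "(\<Sum>a\<in>D. if \<phi> a \<in> S then h (\<phi> a) else 0) = (\<Sum>s\<in>S \<inter> \<phi> ` D. h s)"
proof -
  have "S \<inter> \<phi> ` D = \<phi> ` {a\<in>D. \<phi> a \<in> S}"
    by auto
  moreover have "inj_on \<phi> {a\<in>D. \<phi> a \<in> S}"
    using assms(2) by (rule inj_on_subset) auto
  ultimately show ?thesis
    using assms(1) by (simp add: sum.reindex sum.inter_filter)
qed

lemma L2_set_if_mem_image: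
  assumes "finite D" "inj_on \<phi> D"
  shows "L2_set (\<lambda>a. if \<phi> a \<in> S then x (\<phi> a) else 0) D = L2_set x (S \<inter> \<phi> ` D)"
  unfolding L2_set_def
  using sum_if_mem_image[OF assms, of S "\<lambda>s. (x s)\<^sup>2"] by (simp add: if_distrib[of "\<lambda>r. r\<^sup>2"] cong: if_cong)

lemma sum_prod_if_eq:
  fixes f :: "'b \<Rightarrow> 'c :: comm_semiring_1"
  assumes "finite A" "i \<in> A"
  shows "(\<Sum>b\<in>B. \<Prod>j\<in>A. if j = i then f b else g j) = (\<Prod>j\<in>A. if j = i then sum f B else g j)"
proof -
  have "(\<Prod>j\<in>A. if j = i then h else g j) = h * (\<Prod>j\<in>A - {i}. g j)" for h
    using assms by (simp add: prod.remove)
  then show ?thesis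
    by (simp add: sum_distrib_right)
qed

section \<open>The spectral norm of a graph\<close>

definition adj_apply :: "'a set \<Rightarrow> ('a \<Rightarrow> 'a \<Rightarrow> bool) \<Rightarrow> ('a \<Rightarrow> real) \<Rightarrow> 'a \<Rightarrow> real" where
  "adj_apply D E v y = (\<Sum>x\<in>D. (if E y x then 1 else 0) * v x)"

definition adj_form :: "'a set \<Rightarrow> ('a \<Rightarrow> 'a \<Rightarrow> bool) \<Rightarrow> ('a \<Rightarrow> real) \<Rightarrow> ('a \<Rightarrow> real) \<Rightarrow> real" where
  "adj_form D E u v = (\<Sum>y\<in>D. u y * adj_apply D E v y)"

definition spectral_norm :: "'a set \<Rightarrow> ('a \<Rightarrow> 'a \<Rightarrow> bool) \<Rightarrow> real" where
  "spectral_norm D E = Sup {L2_set (adj_apply D E v) D | v. L2_set v D \<le> 1}"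

lemma adj_apply_eq_sum_nbrs: "finite D \<Longrightarrow> adj_apply D E v y = (\<Sum>x\<in>{x\<in>D. E y x}. v x)"
  unfolding adj_apply_def by (auto simp: sum.inter_filter intro: sum.cong)

lemma adj_form_eq_sum_nbrs:
  "finite D \<Longrightarrow> adj_form D E u v = (\<Sum>y\<in>D. u y * (\<Sum>x\<in>{x\<in>D. E y x}. v x))"
  unfolding adj_form_def by (simp add: adj_apply_eq_sum_nbrs)

lemma adj_apply_scale: "adj_apply D E (\<lambda>x. c * v x) y = c * adj_apply D E v y"
  unfolding adj_apply_def by (simp add: sum_distrib_left mult_ac)

lemma abs_adj_apply_le:
  assumes "finite D" "L2_set v D \<le> 1"
  shows "\<bar>adj_apply D E v y\<bar> \<le> real (card D)"
proof -
  have "\<bar>v x\<bar> \<le> 1" if "x \<in> D" for x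
  proof -
    have "\<bar>v x\<bar> \<le> L2_set (\<lambda>x. \<bar>v x\<bar>) D"
      by (rule member_le_L2_set[OF assms(1) that])
    also have "\<dots> = L2_set v D"
      by (simp add: L2_set_def)
    finally show ?thesis
      using assms(2) by linarith
  qed
  then have "\<bar>adj_apply D E v y\<bar> \<le> (\<Sum>x\<in>D. 1)"
    unfolding adj_apply_def by (intro order_trans[OF sum_abs] sum_mono) auto
  then show ?thesis by simp
qed

lemma bdd_above_spectral_norm:
  assumes "finite D"
  shows "bdd_above {L2_set (adj_apply D E v) D | v. L2_set v D \<le> 1}"
proof (rule bdd_aboveI, clarify)
  fix v assume "L2_set v D \<le> 1"
  then have "L2_set (\<lambda>y. \<bar>adj_apply D E v y\<bar>) D \<le> L2_set (\<lambda>_. real (card D)) D"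
    by (intro L2_set_mono abs_adj_apply_le assms) auto
  moreover have "L2_set (\<lambda>y. \<bar>adj_apply D E v y\<bar>) D = L2_set (adj_apply D E v) D"
    by (simp add: L2_set_def)
  ultimately show "L2_set (adj_apply D E v) D \<le> sqrt (card D) * card D"
    by (simp add: L2_set_constant)
qed

lemma spectral_norm_nonneg:
  assumes "finite D" shows "0 \<le> spectral_norm D E"
proof -
  have "L2_set (adj_apply D E (\<lambda>_. 0)) D \<le> spectral_norm D E"
    unfolding spectral_norm_def
    by (rule cSup_upper[OF _ bdd_above_spectral_norm[OF assms]]) (auto simp: L2_set_def)
  then show ?thesis
    using L2_set_nonneg order_trans by blast
qed

lemma L2_set_adj_apply_le:
  assumes "finite D"
  shows "L2_set (adj_apply D E v) D \<le> spectral_norm D E * L2_set v D"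
proof (cases "L2_set v D = 0")
  case True
  then have "adj_apply D E v y = 0" for y
    using assms by (simp add: adj_apply_def L2_set_eq_0_iff)
  then show ?thesis
    using spectral_norm_nonneg[OF assms] by (simp add: L2_set_def[of "adj_apply D E v"])
next
  case False
  define c where "c = L2_set v D"
  have "c > 0"
    using False L2_set_nonneg[of v D] unfolding c_def by linarith
  have "L2_set (adj_apply D E (\<lambda>x. v x / c)) D \<le> spectral_norm D E"
    unfolding spectral_norm_def using L2_set_divide_self[OF False]
    by (intro cSup_upper bdd_above_spectral_norm assms) (auto simp: c_def)
  moreover have "adj_apply D E (\<lambda>x. v x / c) = (\<lambda>y. adj_apply D E v y * (1 / c))"
    using adj_apply_scale[of D E "1 / c" v] by (auto simp: mult.commute)
  then have "L2_set (adj_apply D E (\<lambda>x. v x / c)) D = L2_set (adj_apply D E v) D / c"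
    using \<open>c > 0\<close> L2_set_left_distrib[of "1 / c" "adj_apply D E v" D] by simp
  ultimately show ?thesis
    using \<open>c > 0\<close> by (simp add: divide_le_eq c_def mult.commute)
qed

lemma adj_form_le_spectral_norm:
  assumes "finite D"
  shows "adj_form D E u v \<le> spectral_norm D E * L2_set u D * L2_set v D"
proof -
  have "adj_form D E u v \<le> L2_set u D * L2_set (adj_apply D E v) D"
    unfolding adj_form_def by (rule sum_mult_le_L2_set)
  also have "\<dots> \<le> L2_set u D * (spectral_norm D E * L2_set v D)"
    by (intro mult_left_mono L2_set_adj_apply_le assms L2_set_nonneg)
  finally show ?thesis by (simp add: mult_ac)
qed

lemma spectral_norm_le:
  assumes "0 \<le> M" and bound: "\<And>u v. adj_form D E u v \<le> M * L2_set u D * L2_set v D"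
  shows "spectral_norm D E \<le> M"
  unfolding spectral_norm_def
proof (rule cSup_least)
  show "{L2_set (adj_apply D E v) D | v. L2_set v D \<le> 1} \<noteq> {}"
    by (auto intro: exI[of _ "\<lambda>_. 0"] simp: L2_set_def)
next
  fix r assume "r \<in> {L2_set (adj_apply D E v) D | v. L2_set v D \<le> 1}"
  then obtain v where r: "r = L2_set (adj_apply D E v) D" and v: "L2_set v D \<le> 1"
    by auto
  have "r\<^sup>2 = adj_form D E (adj_apply D E v) v"
    unfolding r L2_set_sq adj_form_def by (simp add: power2_eq_square)
  also have "\<dots> \<le> M * r * L2_set v D"
    unfolding r by (rule bound)
  also have "\<dots> \<le> M * r"
    using v assms(1) r by (simp add: mult_left_le)
  finally have "r * r \<le> M * r" by (simp add: power2_eq_square)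
  then show "r \<le> M"
    using r assms(1) by (metis L2_set_nonneg mult_right_le_imp_le order_le_less)
qed

lemma finite_lists_length: "finite {xs :: 'a :: finite list. length xs = k}"
  using finite_lists_length_eq[of "UNIV :: 'a set" k] by simp

lemma finite_pdom: "finite (pdom k h)"
  by (rule finite_subset[OF _ finite_lists_length[of k]]) (auto simp: pdom_def)

lemma length_pdom: "x \<in> pdom k h \<Longrightarrow> length x = k"
  unfolding pdom_def by simp

lemma length_sens_edge: "sens_edge k h a b \<Longrightarrow> length b = k"
  unfolding sens_edge_def using length_pdom by blast

lemma sens_edge_the_neq: "sens_edge k h a b \<Longrightarrow> the (h b) = (\<not> the (h a))"
  unfolding sens_edge_def pdom_def by auto

lemma hdist1_sym: "hdist1 x y \<longleftrightarrow> hdist1 y x"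
proof -
  have "{i. i < length y \<and> y ! i \<noteq> x ! i} = {i. i < length x \<and> x ! i \<noteq> y ! i}"
    if "length x = length y"
    using that by (metis (no_types, lifting))
  then show ?thesis
    unfolding hdist1_def by (metis (no_types, lifting))
qed

lemma sens_edge_sym: "sens_edge k h x y \<longleftrightarrow> sens_edge k h y x"
  unfolding sens_edge_def hdist1_sym[of x y] by auto

lemma not_hdist1_refl: "\<not> hdist1 x x"
  unfolding hdist1_def by simp

lemma sens_lambda_eq_spectral_norm: "sens_lambda k h = spectral_norm (pdom k h) (sens_edge k h)"
  unfolding sens_lambda_def spectral_norm_def adj_apply_def L2_set_def by simp

abbreviation sens_nbrs :: "nat \<Rightarrow> pbf \<Rightarrow> bool list \<Rightarrow> bool list set" where
  "sens_nbrs k h a \<equiv> {b \<in> pdom k h. sens_edge k h a b}"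

lemma adj_form_sens_edge:
  "adj_form (pdom k h) (sens_edge k h) u v = (\<Sum>a\<in>pdom k h. u a * sum v (sens_nbrs k h a))"
  by (rule adj_form_eq_sum_nbrs[OF finite_pdom])

lemma sens_lambda_nonneg: "0 \<le> sens_lambda k h"
  unfolding sens_lambda_eq_spectral_norm by (rule spectral_norm_nonneg[OF finite_pdom])

lemma adj_form_le_sens_lambda:
  "adj_form (pdom k h) (sens_edge k h) u v \<le> sens_lambda k h * L2_set u (pdom k h) * L2_set v (pdom k h)"
  unfolding sens_lambda_eq_spectral_norm by (rule adj_form_le_spectral_norm[OF finite_pdom])

lemma sens_lambda_le:
  assumes "0 \<le> M"
    and "\<And>u v. adj_form (pdom k h) (sens_edge k h) u v \<le> M * L2_set u (pdom k h) * L2_set v (pdom k h)"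
  shows "sens_lambda k h \<le> M"
  unfolding sens_lambda_eq_spectral_norm using assms by (rule spectral_norm_le)

definition flip_at :: "nat \<Rightarrow> bool list \<Rightarrow> bool list" where
  "flip_at i z = z[i := \<not> z ! i]"

lemma length_flip_at [simp]: "length (flip_at i z) = length z"
  unfolding flip_at_def by simp

lemma flip_at_inj: "i < length z \<Longrightarrow> flip_at i z = flip_at j z \<Longrightarrow> i = j"
  unfolding flip_at_def by (metis nth_list_update_eq nth_list_update_neq)

lemma hdist1_iff_flip_at: "hdist1 x y \<longleftrightarrow> (\<exists>i<length x. y = flip_at i x)"
proof
  assume "hdist1 x y"
  then have len: "length x = length y" and "card {k. k < length x \<and> x ! k \<noteq> y ! k} = 1"
    unfolding hdist1_def by blast+
  then obtain i where i: "{k. k < length x \<and> x ! k \<noteq> y ! k} = {i}"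
    by (meson card_1_singletonE)
  have "y = flip_at i x"
  proof (rule nth_equalityI)
    show "length y = length (flip_at i x)"
      using len by simp
    fix k assume "k < length y"
    then have "k < length x"
      using len by simp
    then show "y ! k = flip_at i x ! k"
      using i by (cases "k = i") (auto simp: flip_at_def)
  qed
  then show "\<exists>i<length x. y = flip_at i x"
    using i by blast
next
  assume "\<exists>i<length x. y = flip_at i x"
  then obtain i where "i < length x" "y = flip_at i x"
    by blast
  then have "{k. k < length x \<and> x ! k \<noteq> y ! k} = {i}"
    by (auto simp: flip_at_def nth_list_update)
  then show "hdist1 x y"
    unfolding hdist1_def using \<open>y = flip_at i x\<close> by simp
qed

definition sens_coords :: "nat \<Rightarrow> pbf \<Rightarrow> bool list \<Rightarrow> nat set" where
  "sens_coords n f z = {i. i < n \<and> sens_edge n f z (flip_at i z)}"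

lemma sens_nbrs_eq_flip_at:
  assumes "z \<in> pdom n f"
  shows "sens_nbrs n f z = (\<lambda>i. flip_at i z) ` sens_coords n f z"
    and "inj_on (\<lambda>i. flip_at i z) (sens_coords n f z)"
proof -
  have len: "length z = n"
    using assms by (rule length_pdom)
  show "sens_nbrs n f z = (\<lambda>i. flip_at i z) ` sens_coords n f z"
    using len by (auto simp: sens_coords_def sens_edge_def hdist1_iff_flip_at)
  show "inj_on (\<lambda>i. flip_at i z) (sens_coords n f z)"
    using len by (auto intro: inj_onI flip_at_inj simp: sens_coords_def)
qed

lemma adj_form_flip_at:
  "adj_form (pdom n f) (sens_edge n f) p q
     = (\<Sum>z\<in>pdom n f. p z * (\<Sum>i\<in>sens_coords n f z. q (flip_at i z)))"
  unfolding adj_form_sens_edge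
  by (intro sum.cong refl) (simp add: sens_nbrs_eq_flip_at sum.reindex)

section \<open>Blocks\<close>

definition set_blk :: "nat \<Rightarrow> nat \<Rightarrow> 'a list \<Rightarrow> 'a list \<Rightarrow> 'a list" where
  "set_blk m i s b = take (i * m) s @ b @ drop (Suc i * m) s"

lemma blk_index_lt:
  fixes j n r m :: nat
  assumes "j < n" "r < m"
  shows "j * m + r < n * m"
proof -
  have "Suc j * m \<le> n * m"
    using assms(1) by (intro mult_le_mono1) simp
  with assms(2) show ?thesis
    by simp
qed

lemma in_blk_iff: "(r :: nat) < m \<Longrightarrow> i * m \<le> j * m + r \<and> j * m + r < i * m + m \<longleftrightarrow> i = j"
proof
  assume r: "r < m" and in_i: "i * m \<le> j * m + r \<and> j * m + r < i * m + m"
  show "i = j"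
  proof (rule ccontr)
    assume "i \<noteq> j"
    then have "Suc j * m \<le> i * m \<or> Suc i * m \<le> j * m"
      by (metis mult_le_mono1 not_less_eq_eq nat_neq_iff Suc_leI)
    then show False
      using in_i r by auto
  qed
qed auto

lemma length_blk: "length s = n * m \<Longrightarrow> i < n \<Longrightarrow> length (blk m s i) = m"
  unfolding blk_def using mult_le_mono1[of "Suc i" n m] by simp

lemma nth_blk: "length s = n * m \<Longrightarrow> i < n \<Longrightarrow> r < m \<Longrightarrow> blk m s i ! r = s ! (i * m + r)"
  unfolding blk_def using blk_index_lt[of i n r m] by (simp add: add.commute)

lemma blk_eqI:
  assumes "length s = n * m" "length t = n * m" "\<And>j. j < n \<Longrightarrow> blk m s j = blk m t j"
  shows "s = t"
proof (rule nth_equalityI)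
  show "length s = length t"
    using assms by simp
next
  fix k assume "k < length s"
  then have k: "k < n * m"
    using assms by simp
  then have "m > 0"
    by (cases m) auto
  then have r: "k mod m < m" and j: "k div m < n" and k_eq: "k = k div m * m + k mod m"
    using k by (auto simp: less_mult_imp_div_less)
  show "s ! k = t ! k"
    using nth_blk[OF assms(1) j r] nth_blk[OF assms(2) j r] assms(3)[OF j] k_eq by simp
qed

lemma length_set_blk:
  "length s = n * m \<Longrightarrow> i < n \<Longrightarrow> length b = m \<Longrightarrow> length (set_blk m i s b) = n * m"
  unfolding set_blk_def using mult_le_mono1[of "Suc i" n m] by (simp add: algebra_simps)

lemma nth_set_blk:
  assumes "length s = n * m" "i < n" "length b = m" "k < n * m"
  shows "set_blk m i s b ! k = (if i * m \<le> k \<and> k < i * m + m then b ! (k - i * m) else s ! k)"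
proof -
  have le: "Suc i * m \<le> n * m"
    using assms by (intro mult_le_mono1) simp
  then have lt: "length (take (i * m) s) = i * m"
    using assms by simp
  consider "k < i * m" | "i * m \<le> k \<and> k < i * m + m" | "i * m + m \<le> k"
    by linarith
  then show ?thesis
    by cases (use le assms in \<open>auto simp: set_blk_def nth_append lt\<close>)
qed

lemma blk_set_blk:
  assumes "length s = n * m" "i < n" "length b = m" "j < n"
  shows "blk m (set_blk m i s b) j = (if j = i then b else blk m s j)"
proof (rule nth_equalityI)
  have len: "length (set_blk m i s b) = n * m"
    by (rule length_set_blk[OF assms(1-3)])
  show "length (blk m (set_blk m i s b) j) = length (if j = i then b else blk m s j)"
    using length_blk[OF len assms(4)] length_blk[OF assms(1,4)] assms by simp
  fix r assume "r < length (blk m (set_blk m i s b) j)"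
  then have r: "r < m"
    using length_blk[OF len assms(4)] by simp
  show "blk m (set_blk m i s b) j ! r = (if j = i then b else blk m s j) ! r"
    using nth_blk[OF len assms(4) r] nth_set_blk[OF assms(1-3) blk_index_lt[OF assms(4) r]]
      in_blk_iff[OF r, of i j] nth_blk[OF assms(1,4) r] by auto
qed

lemma set_blk_blk:
  assumes "length s = n * m" "i < n"
  shows "set_blk m i s (blk m s i) = s"
  by (rule blk_eqI[of _ n m])
    (use assms length_blk[OF assms] in \<open>simp_all add: length_set_blk blk_set_blk[OF assms]\<close>)

lemma set_blk_set_blk:
  assumes "i * m \<le> length s" "length a = m"
  shows "set_blk m i (set_blk m i s a) b = set_blk m i s b"
  using assms by (simp add: set_blk_def)

lemma set_blk_inj: "length a = length b \<Longrightarrow> set_blk m i c a = set_blk m i c b \<Longrightarrow> a = b"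
  unfolding set_blk_def by simp

lemma set_blk_diff_positions:
  assumes "length s = n * m" "i < n" "length b = m"
  shows "{k. k < length s \<and> s ! k \<noteq> set_blk m i s b ! k}
      = (\<lambda>r. i * m + r) ` {r. r < length (blk m s i) \<and> blk m s i ! r \<noteq> b ! r}"
    (is "?L = ?R")
proof -
  have nth_eq: "set_blk m i s b ! (i * m + r) = b ! r" "s ! (i * m + r) = blk m s i ! r" if "r < m" for r
    using nth_set_blk[OF assms blk_index_lt[OF assms(2) that]] nth_blk[OF assms(1,2) that] that
    by simp_all
  show ?thesis
  proof (intro set_eqI iffI)
    fix k assume "k \<in> ?L"
    then have k: "k < n * m" and d: "s ! k \<noteq> set_blk m i s b ! k"
      using assms by auto
    then have "i * m \<le> k \<and> k < i * m + m"
      using nth_set_blk[OF assms k] by (auto split: if_splits)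
    then obtain r where r: "r < m" and k_eq: "k = i * m + r"
      by (metis add_less_cancel_left le_add_diff_inverse)
    then show "k \<in> ?R"
      using d nth_eq[OF r] length_blk[OF assms(1,2)] by (auto simp: image_iff)
  next
    fix k assume "k \<in> ?R"
    then obtain r where "k = i * m + r" "r < m" "blk m s i ! r \<noteq> b ! r"
      using length_blk[OF assms(1,2)] by auto
    then show "k \<in> ?L"
      using nth_eq blk_index_lt[OF assms(2)] assms(1) by auto
  qed
qed

lemma hdist1_set_blk_iff:
  assumes "length s = n * m" "i < n" "length b = m"
  shows "hdist1 s (set_blk m i s b) \<longleftrightarrow> hdist1 (blk m s i) b"
proof -
  have "card {k. k < length s \<and> s ! k \<noteq> set_blk m i s b ! k}
      = card {r. r < length (blk m s i) \<and> blk m s i ! r \<noteq> b ! r}"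
    unfolding set_blk_diff_positions[OF assms] by (simp add: card_image inj_on_def)
  moreover have "length (set_blk m i s b) = length s" "length (blk m s i) = length b"
    using length_set_blk[OF assms] length_blk[OF assms(1,2)] assms by simp_all
  ultimately show ?thesis
    unfolding hdist1_def by argo
qed

lemma hdist1_imp_set_blk:
  assumes s: "length s = n * m" and t: "length t = n * m" and "hdist1 s t"
  obtains i where "i < n" "t = set_blk m i s (blk m t i)"
proof -
  obtain k where k: "k < n * m" and t_eq: "t = flip_at k s"
    using \<open>hdist1 s t\<close> s by (auto simp: hdist1_iff_flip_at)
  then have "m > 0"
    by (cases m) auto
  define i where "i = k div m"
  have i: "i < n"
    using k unfolding i_def by (simp add: less_mult_imp_div_less)
  have "blk m t j = blk m s j" if j: "j < n" "j \<noteq> i" for j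
  proof (rule nth_equalityI)
    show "length (blk m t j) = length (blk m s j)"
      using length_blk[OF t j(1)] length_blk[OF s j(1)] by simp
    fix r assume "r < length (blk m t j)"
    then have r: "r < m"
      using length_blk[OF t j(1)] by simp
    have "(j * m + r) div m = j"
      using r by simp
    then have "j * m + r \<noteq> k"
      using j(2) unfolding i_def by auto
    then show "blk m t j ! r = blk m s j ! r"
      using nth_blk[OF s j(1) r] nth_blk[OF t j(1) r] t_eq by (simp add: flip_at_def)
  qed
  then have "t = set_blk m i s (blk m t i)"
    by (intro blk_eqI[OF t length_set_blk[OF s i length_blk[OF t i]]])
      (simp add: blk_set_blk[OF s i length_blk[OF t i]])
  with i that show ?thesis
    by blast
qed

definition erase_blk :: "nat \<Rightarrow> nat \<Rightarrow> bool list \<Rightarrow> bool list" where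
  "erase_blk m i s = set_blk m i s (replicate m False)"

lemma length_erase_blk: "length s = n * m \<Longrightarrow> i < n \<Longrightarrow> length (erase_blk m i s) = n * m"
  unfolding erase_blk_def by (simp add: length_set_blk)

lemma set_blk_erase_blk:
  assumes "length s = n * m" "i < n" "length b = m"
  shows "set_blk m i (erase_blk m i s) b = set_blk m i s b"
proof -
  have "i * m \<le> length s"
    using assms(1,2) by simp
  then show ?thesis
    unfolding erase_blk_def by (simp add: set_blk_set_blk)
qed

lemma erase_blk_set_blk:
  assumes "length s = n * m" "i < n" "length b = m"
  shows "erase_blk m i (set_blk m i s b) = erase_blk m i s"
proof -
  have "i * m \<le> length s"
    using assms(1,2) by simp
  then show ?thesis
    unfolding erase_blk_def using assms(3) by (simp add: set_blk_set_blk)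
qed

lemma set_blk_erase_blk_blk:
  assumes "length s = n * m" "i < n"
  shows "set_blk m i (erase_blk m i s) (blk m s i) = s"
  using set_blk_erase_blk[OF assms length_blk[OF assms]] set_blk_blk[OF assms] by simp

definition blk_prod :: "nat \<Rightarrow> nat \<Rightarrow> (nat \<Rightarrow> bool list set) \<Rightarrow> bool list set" where
  "blk_prod n m S = {s. length s = n * m \<and> (\<forall>j<n. blk m s j \<in> S j)}"

lemma blk_append_less: "length s = n * m \<Longrightarrow> j < n \<Longrightarrow> blk m (s @ a) j = blk m s j"
  unfolding blk_def using mult_le_mono1[of "Suc j" n m] by (simp add: take_append)

lemma blk_append_length: "length s = n * m \<Longrightarrow> length a = m \<Longrightarrow> blk m (s @ a) n = a"
  unfolding blk_def by simp

lemma blk_prod_Suc: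
  assumes S: "\<And>j. S j \<subseteq> {a. length a = m}"
  shows "blk_prod (Suc n) m S = (\<lambda>(s, a). s @ a) ` (blk_prod n m S \<times> S n)"
proof (intro set_eqI iffI)
  fix t assume t: "t \<in> blk_prod (Suc n) m S"
  define s a where "s = take (n * m) t" and "a = drop (n * m) t"
  have t_eq: "t = s @ a" and len_s: "length s = n * m" and len_a: "length a = m"
    using t by (simp_all add: s_def a_def blk_prod_def)
  have blk_t: "blk m (s @ a) j \<in> S j" if "j < Suc n" for j
    using t that unfolding t_eq by (simp add: blk_prod_def)
  have "blk m s j \<in> S j" if "j < n" for j
    using blk_t[of j] blk_append_less[OF len_s that] that by simp
  then have "s \<in> blk_prod n m S"
    using len_s by (simp add: blk_prod_def)
  moreover have "a \<in> S n"
    using blk_t[of n] blk_append_length[OF len_s len_a] by simp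
  ultimately show "t \<in> (\<lambda>(s, a). s @ a) ` (blk_prod n m S \<times> S n)"
    using t_eq by auto
next
  fix t assume "t \<in> (\<lambda>(s, a). s @ a) ` (blk_prod n m S \<times> S n)"
  then obtain s a where s: "s \<in> blk_prod n m S" and a: "a \<in> S n" and t: "t = s @ a"
    by auto
  have len_s: "length s = n * m" and len_a: "length a = m"
    using s a S by (auto simp: blk_prod_def)
  have "blk m t j \<in> S j" if "j < Suc n" for j
    using that s a blk_append_less[OF len_s] blk_append_length[OF len_s len_a]
    unfolding t blk_prod_def by (cases "j = n") auto
  then show "t \<in> blk_prod (Suc n) m S"
    unfolding blk_prod_def t using len_s len_a by simp
qed

lemma sum_blk_prod:
  assumes "\<And>j. S j \<subseteq> {a. length a = m}"
  shows "(\<Sum>s\<in>blk_prod n m S. \<Prod>j<n. h j (blk m s j)) = (\<Prod>j<n. \<Sum>a\<in>S j. (h j a :: 'c :: comm_semiring_1))"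
proof (induction n)
  case 0
  have "blk_prod 0 m S = {[]}"
    unfolding blk_prod_def by auto
  then show ?case
    by simp
next
  case (Suc n)
  have inj: "inj_on (\<lambda>(s, a). s @ a) (blk_prod n m S \<times> S n)"
    by (rule inj_onI) (auto simp: blk_prod_def)
  have "(\<Sum>s\<in>blk_prod (Suc n) m S. \<Prod>j<Suc n. h j (blk m s j))
      = (\<Sum>(s, a)\<in>blk_prod n m S \<times> S n. \<Prod>j<Suc n. h j (blk m (s @ a) j))"
    unfolding blk_prod_Suc[OF assms] sum.reindex[OF inj] by (simp add: case_prod_beta)
  also have "\<dots> = (\<Sum>(s, a)\<in>blk_prod n m S \<times> S n. (\<Prod>j<n. h j (blk m s j)) * h n a)"
  proof (intro sum.cong refl, clarify)
    fix s a assume "s \<in> blk_prod n m S" "a \<in> S n"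
    then have len_s: "length s = n * m" and len_a: "length a = m"
      using assms by (auto simp: blk_prod_def)
    then show "(\<Prod>j<Suc n. h j (blk m (s @ a) j)) = (\<Prod>j<n. h j (blk m s j)) * h n a"
      by (simp add: blk_append_less[OF len_s] blk_append_length)
  qed
  also have "\<dots> = (\<Sum>s\<in>blk_prod n m S. \<Prod>j<n. h j (blk m s j)) * (\<Sum>a\<in>S n. h n a)"
    by (simp add: sum_product sum.cartesian_product)
  finally show ?case
    using Suc.IH by simp
qed

section \<open>The sensitivity graph of a composition\<close>

definition blk_vals :: "nat \<Rightarrow> nat \<Rightarrow> pbf \<Rightarrow> bool list \<Rightarrow> bool list" where
  "blk_vals n m g s = map (\<lambda>j. the (g (blk m s j))) [0..<n]"

lemma length_blk_vals [simp]: "length (blk_vals n m g s) = n"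
  unfolding blk_vals_def by simp

lemma nth_blk_vals: "j < n \<Longrightarrow> blk_vals n m g s ! j = the (g (blk m s j))"
  unfolding blk_vals_def by simp

lemma pdom_pcomp_iff:
  "s \<in> pdom (n * m) (pcomp n m f g) \<longleftrightarrow>
     length s = n * m \<and> (\<forall>j<n. blk m s j \<in> pdom m g) \<and> blk_vals n m g s \<in> pdom n f"
  unfolding pdom_def pcomp_def blk_vals_def by (simp; blast)

lemma pcomp_eq: "s \<in> pdom (n * m) (pcomp n m f g) \<Longrightarrow> pcomp n m f g s = f (blk_vals n m g s)"
  unfolding pdom_pcomp_iff by (simp add: pcomp_def blk_vals_def)

lemma blk_vals_set_blk:
  assumes "length s = n * m" "i < n" "length b = m"
  shows "blk_vals n m g (set_blk m i s b) = (blk_vals n m g s)[i := the (g b)]"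
  by (rule nth_equalityI) (simp_all add: blk_set_blk[OF assms] nth_blk_vals nth_list_update)

lemma blk_vals_set_blk_sens_edge:
  assumes "length s = n * m" "i < n" "sens_edge m g (blk m s i) b"
  shows "blk_vals n m g (set_blk m i s b) = flip_at i (blk_vals n m g s)"
proof -
  have "length b = m"
    using assms(3) by (rule length_sens_edge)
  then show ?thesis
    using blk_vals_set_blk[OF assms(1,2)] sens_edge_the_neq[OF assms(3)] assms(2)
    by (simp add: flip_at_def nth_blk_vals)
qed

lemma set_blk_mem_pdom_pcomp_iff:
  assumes s: "s \<in> pdom (n * m) (pcomp n m f g)" and i: "i < n" and b: "length b = m"
  shows "set_blk m i s b \<in> pdom (n * m) (pcomp n m f g) \<longleftrightarrow>
           b \<in> pdom m g \<and> blk_vals n m g (set_blk m i s b) \<in> pdom n f"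
proof -
  have len: "length s = n * m" and blks: "\<forall>j<n. blk m s j \<in> pdom m g"
    using s unfolding pdom_pcomp_iff by blast+
  have "(\<forall>j<n. blk m (set_blk m i s b) j \<in> pdom m g) \<longleftrightarrow> b \<in> pdom m g"
    using blk_set_blk[OF len i b] blks i by auto
  then show ?thesis
    unfolding pdom_pcomp_iff[of "set_blk m i s b"] using length_set_blk[OF len i b] by blast
qed

lemma sens_edge_pcomp_set_blk_iff:
  assumes s: "s \<in> pdom (n * m) (pcomp n m f g)" and i: "i < n" and b: "length b = m"
  shows "sens_edge (n * m) (pcomp n m f g) s (set_blk m i s b) \<longleftrightarrow>
           sens_edge m g (blk m s i) b \<and> i \<in> sens_coords n f (blk_vals n m g s)"
proof -
  have len: "length s = n * m" and blk_s: "blk m s i \<in> pdom m g" and z: "blk_vals n m g s \<in> pdom n f"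
    using s i unfolding pdom_pcomp_iff by blast+
  define t where "t = set_blk m i s b"
  have t_iff: "t \<in> pdom (n * m) (pcomp n m f g) \<longleftrightarrow> b \<in> pdom m g \<and> blk_vals n m g t \<in> pdom n f"
    unfolding t_def by (rule set_blk_mem_pdom_pcomp_iff[OF s i b])
  have hdist: "hdist1 s t \<longleftrightarrow> hdist1 (blk m s i) b"
    unfolding t_def by (rule hdist1_set_blk_iff[OF len i b])
  show ?thesis
  proof
    assume "sens_edge (n * m) (pcomp n m f g) s (set_blk m i s b)"
    then have t: "t \<in> pdom (n * m) (pcomp n m f g)" and "hdist1 s t"
      and val_ne: "f (blk_vals n m g s) \<noteq> f (blk_vals n m g t)"
      unfolding t_def sens_edge_def by (auto simp: pcomp_eq)
    have "g (blk m s i) \<noteq> g b"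
    proof
      assume "g (blk m s i) = g b"
      then have "the (g b) = blk_vals n m g s ! i"
        by (simp add: nth_blk_vals[OF i])
      then have "blk_vals n m g t = blk_vals n m g s"
        unfolding t_def blk_vals_set_blk[OF len i b] by simp
      with val_ne show False
        by simp
    qed
    then have edge_g: "sens_edge m g (blk m s i) b"
      using blk_s t t_iff \<open>hdist1 s t\<close> hdist unfolding sens_edge_def by simp
    then have "blk_vals n m g t = flip_at i (blk_vals n m g s)"
      unfolding t_def by (rule blk_vals_set_blk_sens_edge[OF len i])
    then have "sens_edge n f (blk_vals n m g s) (flip_at i (blk_vals n m g s))"
      using z t t_iff val_ne i unfolding sens_edge_def by (simp add: hdist1_iff_flip_at) blast
    with edge_g i show "sens_edge m g (blk m s i) b \<and> i \<in> sens_coords n f (blk_vals n m g s)"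
      by (simp add: sens_coords_def)
  next
    assume "sens_edge m g (blk m s i) b \<and> i \<in> sens_coords n f (blk_vals n m g s)"
    then have edge_g: "sens_edge m g (blk m s i) b"
      and edge_f: "sens_edge n f (blk_vals n m g s) (flip_at i (blk_vals n m g s))"
      by (auto simp: sens_coords_def)
    moreover have "blk_vals n m g t = flip_at i (blk_vals n m g s)"
      unfolding t_def by (rule blk_vals_set_blk_sens_edge[OF len i edge_g])
    ultimately show "sens_edge (n * m) (pcomp n m f g) s (set_blk m i s b)"
      using s t_iff hdist unfolding sens_edge_def t_def by (simp add: pcomp_eq)
  qed
qed

lemma sens_nbrs_pcomp:
  assumes s: "s \<in> pdom (n * m) (pcomp n m f g)"
  defines "P \<equiv> SIGMA i:sens_coords n f (blk_vals n m g s). sens_nbrs m g (blk m s i)"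
  shows "sens_nbrs (n * m) (pcomp n m f g) s = (\<lambda>(i, b). set_blk m i s b) ` P"
    and "inj_on (\<lambda>(i, b). set_blk m i s b) P"
proof -
  have len: "length s = n * m"
    using s by (simp add: pdom_pcomp_iff)
  have P_iff: "(i, b) \<in> P \<longleftrightarrow> sens_edge (n * m) (pcomp n m f g) s (set_blk m i s b)"
    if "i < n" "length b = m" for i b
    using sens_edge_pcomp_set_blk_iff[OF s that] unfolding P_def by (auto simp: sens_edge_def)
  have P_le: "i < n \<and> length b = m" if "(i, b) \<in> P" for i b
    using that unfolding P_def sens_coords_def sens_edge_def by (auto simp: length_pdom)
  show "sens_nbrs (n * m) (pcomp n m f g) s = (\<lambda>(i, b). set_blk m i s b) ` P"
  proof (intro set_eqI iffI)
    fix t assume "t \<in> sens_nbrs (n * m) (pcomp n m f g) s"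
    then have t: "t \<in> pdom (n * m) (pcomp n m f g)" and edge: "sens_edge (n * m) (pcomp n m f g) s t"
      by auto
    obtain i where i: "i < n" and t_eq: "t = set_blk m i s (blk m t i)"
      using hdist1_imp_set_blk[OF len length_pdom[OF t]] edge unfolding sens_edge_def by blast
    have "(i, blk m t i) \<in> P"
      using P_iff[OF i length_blk[OF length_pdom[OF t] i]] edge t_eq by simp
    then show "t \<in> (\<lambda>(i, b). set_blk m i s b) ` P"
      using t_eq by (auto intro: image_eqI[of _ _ "(i, blk m t i)"])
  next
    fix t assume "t \<in> (\<lambda>(i, b). set_blk m i s b) ` P"
    then obtain i b where ib: "(i, b) \<in> P" and t: "t = set_blk m i s b"
      by auto
    then show "t \<in> sens_nbrs (n * m) (pcomp n m f g) s"
      using P_iff P_le[OF ib] unfolding sens_edge_def by auto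
  qed
  show "inj_on (\<lambda>(i, b). set_blk m i s b) P"
  proof (rule inj_onI, clarify)
    fix i b i' b' assume ib: "(i, b) \<in> P" and ib': "(i', b') \<in> P"
      and eq: "set_blk m i s b = set_blk m i' s b'"
    have "b \<noteq> blk m s i"
      using ib not_hdist1_refl unfolding P_def sens_edge_def by auto
    moreover have "b = (if i = i' then b' else blk m s i)"
      using arg_cong[OF eq, of "\<lambda>t. blk m t i"] P_le[OF ib] P_le[OF ib']
      by (simp add: blk_set_blk[OF len])
    ultimately show "i = i' \<and> b = b'"
      by (auto split: if_splits)
  qed
qed

lemma adj_form_pcomp:
  "adj_form (pdom (n * m) (pcomp n m f g)) (sens_edge (n * m) (pcomp n m f g)) x y =
    (\<Sum>s\<in>pdom (n * m) (pcomp n m f g). x s *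
       (\<Sum>i\<in>sens_coords n f (blk_vals n m g s). \<Sum>b\<in>sens_nbrs m g (blk m s i). y (set_blk m i s b)))"
  unfolding adj_form_sens_edge
proof (intro sum.cong refl arg_cong2[where f = times])
  fix s assume s: "s \<in> pdom (n * m) (pcomp n m f g)"
  show "sum y (sens_nbrs (n * m) (pcomp n m f g) s) =
    (\<Sum>i\<in>sens_coords n f (blk_vals n m g s). \<Sum>b\<in>sens_nbrs m g (blk m s i). y (set_blk m i s b))"
    unfolding sens_nbrs_pcomp[OF s] sum.reindex[OF sens_nbrs_pcomp(2)[OF s]]
    by (subst sum.Sigma) (auto simp: finite_pdom sens_coords_def case_prod_beta comp_def)
qed

definition blk_fiber :: "nat \<Rightarrow> nat \<Rightarrow> pbf \<Rightarrow> bool list \<Rightarrow> bool list set" where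
  "blk_fiber n m g z = {s. length s = n * m \<and> (\<forall>j<n. blk m s j \<in> pdom m g) \<and> blk_vals n m g s = z}"

lemma finite_blk_fiber: "finite (blk_fiber n m g z)"
  by (rule finite_subset[OF _ finite_lists_length[of "n * m"]]) (auto simp: blk_fiber_def)

lemma pdom_pcomp_fiber:
  "z \<in> pdom n f \<Longrightarrow> {s \<in> pdom (n * m) (pcomp n m f g). blk_vals n m g s = z} = blk_fiber n m g z"
  unfolding blk_fiber_def by (auto simp: pdom_pcomp_iff)

lemma sum_pdom_pcomp:
  "(\<Sum>s\<in>pdom (n * m) (pcomp n m f g). F s) = (\<Sum>z\<in>pdom n f. \<Sum>s\<in>blk_fiber n m g z. F s)"
proof -
  have "(\<Sum>s\<in>pdom (n * m) (pcomp n m f g). F s)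
      = (\<Sum>z\<in>pdom n f. \<Sum>s\<in>{s \<in> pdom (n * m) (pcomp n m f g). blk_vals n m g s = z}. F s)"
    by (rule sum.group[symmetric, OF finite_pdom finite_pdom]) (auto simp: pdom_pcomp_iff)
  also have "\<dots> = (\<Sum>z\<in>pdom n f. \<Sum>s\<in>blk_fiber n m g z. F s)"
    by (intro sum.cong refl) (simp add: pdom_pcomp_fiber)
  finally show ?thesis .
qed

lemma L2_set_pdom_pcomp:
  "L2_set x (pdom (n * m) (pcomp n m f g)) = L2_set (\<lambda>z. L2_set x (blk_fiber n m g z)) (pdom n f)"
proof -
  have "L2_set x (pdom (n * m) (pcomp n m f g))
      = L2_set (\<lambda>z. L2_set x {s \<in> pdom (n * m) (pcomp n m f g). blk_vals n m g s = z}) (pdom n f)"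
    by (rule L2_set_group[symmetric, OF finite_pdom finite_pdom]) (auto simp: pdom_pcomp_iff)
  also have "\<dots> = L2_set (\<lambda>z. L2_set x (blk_fiber n m g z)) (pdom n f)"
    by (intro L2_set_cong refl) (simp add: pdom_pcomp_fiber)
  finally show ?thesis .
qed

lemma set_blk_mem_blk_fiber:
  assumes s: "s \<in> blk_fiber n m g z" and i: "i < n" and edge: "sens_edge m g (blk m s i) b"
  shows "set_blk m i s b \<in> blk_fiber n m g (flip_at i z)"
proof -
  have len: "length s = n * m" and "\<forall>j<n. blk m s j \<in> pdom m g" and "blk_vals n m g s = z"
    using s by (auto simp: blk_fiber_def)
  moreover have "b \<in> pdom m g"
    using edge by (simp add: sens_edge_def)
  ultimately show ?thesis
    unfolding blk_fiber_def
    using length_set_blk[OF len i] blk_set_blk[OF len i] blk_vals_set_blk_sens_edge[OF len i edge]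
    by (simp add: length_pdom)
qed

definition val_set :: "nat \<Rightarrow> pbf \<Rightarrow> bool \<Rightarrow> bool list set" where
  "val_set m g c = {a \<in> pdom m g. g a = Some c}"

lemma finite_val_set: "finite (val_set m g c)"
  unfolding val_set_def using finite_pdom by simp

lemma val_set_eq: "val_set m g c = {a \<in> pdom m g. the (g a) = c}"
  unfolding val_set_def pdom_def by auto

lemma length_val_set: "val_set m g c \<subseteq> {a. length a = m}"
  unfolding val_set_def pdom_def by auto

lemma sens_edge_val_set: "a \<in> val_set m g c \<Longrightarrow> sens_edge m g a b \<Longrightarrow> b \<in> val_set m g (\<not> c)"
  using sens_edge_the_neq[of m g a b] unfolding val_set_eq by (simp add: sens_edge_def)

lemma L2_set_pdom_val_set:
  "L2_set v (pdom m g) = L2_set (\<lambda>c. L2_set v (val_set m g c)) UNIV"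
  unfolding val_set_eq by (rule L2_set_group[symmetric]) (simp_all add: finite_pdom)

lemma blk_fiber_eq_blk_prod:
  assumes "length z = n"
  shows "blk_fiber n m g z = blk_prod n m (\<lambda>j. val_set m g (z ! j))"
proof -
  have "blk_vals n m g s = z \<longleftrightarrow> (\<forall>j<n. the (g (blk m s j)) = z ! j)" for s
    using assms by (auto simp: list_eq_iff_nth_eq nth_blk_vals)
  then show ?thesis
    unfolding blk_fiber_def blk_prod_def val_set_eq by auto
qed

section \<open>Upper bound\<close>

text \<open>A slice of a fibre, with all blocks but the \<open>i\<close>-th fixed to those of \<open>c\<close>, embeds into
  \<open>dom g\<close> via its \<open>i\<close>-th block, and its edges towards the flipped fibre are edges of \<open>G\<^sub>g\<close>.\<close>

lemma fiber_slice_le: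
  fixes n m i :: nat and g :: pbf and z c :: "bool list" and x y :: "bool list \<Rightarrow> real"
  assumes i: "i < n" and c: "length c = n * m"
  defines "S \<equiv> {s \<in> blk_fiber n m g z. erase_blk m i s = c}"
    and "T \<equiv> {t \<in> blk_fiber n m g (flip_at i z). erase_blk m i t = c}"
  shows "(\<Sum>s\<in>S. x s * (\<Sum>b\<in>sens_nbrs m g (blk m s i). y (set_blk m i s b)))
     \<le> sens_lambda m g * L2_set x S * L2_set y T"
proof -
  let ?\<phi> = "set_blk m i c"
  define u where "u a = (if ?\<phi> a \<in> S then x (?\<phi> a) else 0)" for a
  define v where "v b = (if ?\<phi> b \<in> T then y (?\<phi> b) else 0)" for b
  have inj: "inj_on ?\<phi> (pdom m g)"
    by (rule inj_onI) (auto intro: set_blk_inj simp: length_pdom)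
  have S: "length s = n * m" "blk m s i \<in> pdom m g" "erase_blk m i s = c" if "s \<in> S" for s
    using that i unfolding S_def blk_fiber_def by blast+
  have S_image: "S \<subseteq> ?\<phi> ` pdom m g"
    using S set_blk_erase_blk_blk[OF _ i] by (metis image_eqI subsetI)
  have nbr_T: "set_blk m i s b \<in> T \<and> ?\<phi> b = set_blk m i s b"
    if "s \<in> S" "sens_edge m g (blk m s i) b" for s b
  proof -
    have "length b = m"
      using that(2) by (rule length_sens_edge)
    then have "erase_blk m i (set_blk m i s b) = c" and "?\<phi> b = set_blk m i s b"
      using erase_blk_set_blk[OF S(1)[OF that(1)] i] set_blk_erase_blk[OF S(1)[OF that(1)] i]
        S(3)[OF that(1)] by simp_all
    moreover have "set_blk m i s b \<in> blk_fiber n m g (flip_at i z)"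
      using set_blk_mem_blk_fiber[OF _ i that(2)] that(1) unfolding S_def by blast
    ultimately show ?thesis
      unfolding T_def by blast
  qed
  have "adj_form (pdom m g) (sens_edge m g) u v
      = (\<Sum>a\<in>pdom m g. if ?\<phi> a \<in> S then x (?\<phi> a) * sum v (sens_nbrs m g (blk m (?\<phi> a) i)) else 0)"
    unfolding adj_form_sens_edge u_def
    using blk_set_blk[OF c i _ i] length_pdom by (intro sum.cong refl) auto
  also have "\<dots> = (\<Sum>s\<in>S. x s * sum v (sens_nbrs m g (blk m s i)))"
    using sum_if_mem_image[OF finite_pdom inj, of S "\<lambda>s. x s * sum v (sens_nbrs m g (blk m s i))"]
    by (simp add: Int_absorb2[OF S_image])
  also have "\<dots> = (\<Sum>s\<in>S. x s * (\<Sum>b\<in>sens_nbrs m g (blk m s i). y (set_blk m i s b)))"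
    using nbr_T by (auto simp: v_def intro!: sum.cong)
  finally have form: "(\<Sum>s\<in>S. x s * (\<Sum>b\<in>sens_nbrs m g (blk m s i). y (set_blk m i s b)))
      = adj_form (pdom m g) (sens_edge m g) u v" ..
  have "L2_set u (pdom m g) = L2_set x S"
    unfolding u_def L2_set_if_mem_image[OF finite_pdom inj] Int_absorb2[OF S_image] ..
  moreover have "L2_set v (pdom m g) \<le> L2_set y T"
    unfolding v_def L2_set_if_mem_image[OF finite_pdom inj]
    by (rule L2_set_subset_le) (auto simp: T_def finite_blk_fiber)
  ultimately show ?thesis
    unfolding form
    by (intro order_trans[OF adj_form_le_sens_lambda])
      (auto intro!: mult_left_mono mult_nonneg_nonneg sens_lambda_nonneg)
qed

lemma fiber_sum_le:
  fixes n m i :: nat and g :: pbf and z :: "bool list" and x y :: "bool list \<Rightarrow> real"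
  assumes i: "i < n"
  defines "W \<equiv> blk_fiber n m g z" and "W' \<equiv> blk_fiber n m g (flip_at i z)"
  shows "(\<Sum>s\<in>W. x s * (\<Sum>b\<in>sens_nbrs m g (blk m s i). y (set_blk m i s b)))
     \<le> sens_lambda m g * L2_set x W * L2_set y W'"
proof -
  define C where "C = erase_blk m i ` W"
  define C' where "C' = C \<union> erase_blk m i ` W'"
  define X where "X c = L2_set x {s \<in> W. erase_blk m i s = c}" for c
  define Y where "Y c = L2_set y {t \<in> W'. erase_blk m i t = c}" for c
  have fin: "finite W" "finite W'" "finite C" "finite C'"
    unfolding W_def W'_def C_def C'_def by (simp_all add: finite_blk_fiber)
  have "(\<Sum>s\<in>W. x s * (\<Sum>b\<in>sens_nbrs m g (blk m s i). y (set_blk m i s b)))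
      = (\<Sum>c\<in>C. \<Sum>s\<in>{s \<in> W. erase_blk m i s = c}.
           x s * (\<Sum>b\<in>sens_nbrs m g (blk m s i). y (set_blk m i s b)))"
    by (rule sum.group[symmetric, OF fin(1,3)]) (simp add: C_def)
  also have "\<dots> \<le> (\<Sum>c\<in>C. sens_lambda m g * X c * Y c)"
  proof (rule sum_mono)
    fix c assume "c \<in> C"
    then have "length c = n * m"
      using length_erase_blk[OF _ i] unfolding C_def W_def blk_fiber_def by auto
    then show "(\<Sum>s\<in>{s \<in> W. erase_blk m i s = c}.
        x s * (\<Sum>b\<in>sens_nbrs m g (blk m s i). y (set_blk m i s b))) \<le> sens_lambda m g * X c * Y c"
      unfolding X_def Y_def W_def W'_def by (rule fiber_slice_le[OF i])
  qed
  also have "\<dots> \<le> sens_lambda m g * (L2_set X C * L2_set Y C)"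
    by (simp add: sum_distrib_left mult.assoc mult_left_mono sens_lambda_nonneg sum_mult_le_L2_set
        flip: sum_distrib_left)
  also have "\<dots> \<le> sens_lambda m g * (L2_set x W * L2_set y W')"
  proof -
    have "L2_set X C = L2_set x W"
      unfolding X_def by (rule L2_set_group[OF fin(1,3)]) (simp add: C_def)
    moreover have "L2_set Y C \<le> L2_set Y C'"
      using fin(4) by (rule L2_set_subset_le) (simp add: C'_def)
    moreover have "L2_set Y C' = L2_set y W'"
      unfolding Y_def by (rule L2_set_group[OF fin(2,4)]) (auto simp: C'_def)
    ultimately show ?thesis
      by (simp add: mult_left_mono sens_lambda_nonneg)
  qed
  finally show ?thesis
    by (simp add: mult.assoc)
qed

lemma adj_form_pcomp_le:
  "adj_form (pdom (n * m) (pcomp n m f g)) (sens_edge (n * m) (pcomp n m f g)) x y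
     \<le> sens_lambda n f * sens_lambda m g
         * L2_set x (pdom (n * m) (pcomp n m f g)) * L2_set y (pdom (n * m) (pcomp n m f g))"
proof -
  define X where "X z = L2_set x (blk_fiber n m g z)" for z
  define Y where "Y z = L2_set y (blk_fiber n m g z)" for z
  define H where "H s i = x s * (\<Sum>b\<in>sens_nbrs m g (blk m s i). y (set_blk m i s b))" for s i
  have "adj_form (pdom (n * m) (pcomp n m f g)) (sens_edge (n * m) (pcomp n m f g)) x y
      = (\<Sum>z\<in>pdom n f. \<Sum>s\<in>blk_fiber n m g z. \<Sum>i\<in>sens_coords n f z. H s i)"
    unfolding adj_form_pcomp sum_pdom_pcomp H_def sum_distrib_left
    by (intro sum.cong refl) (simp add: blk_fiber_def)
  also have "\<dots> = (\<Sum>z\<in>pdom n f. \<Sum>i\<in>sens_coords n f z. \<Sum>s\<in>blk_fiber n m g z. H s i)"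
    by (intro sum.cong refl sum.swap)
  also have "\<dots> \<le> (\<Sum>z\<in>pdom n f. \<Sum>i\<in>sens_coords n f z. sens_lambda m g * X z * Y (flip_at i z))"
    unfolding H_def X_def Y_def
    by (intro sum_mono fiber_sum_le) (simp add: sens_coords_def)
  also have "\<dots> = sens_lambda m g * adj_form (pdom n f) (sens_edge n f) X Y"
    unfolding adj_form_flip_at by (simp add: sum_distrib_left mult_ac)
  also have "\<dots> \<le> sens_lambda m g * (sens_lambda n f * L2_set X (pdom n f) * L2_set Y (pdom n f))"
    by (intro mult_left_mono adj_form_le_sens_lambda sens_lambda_nonneg)
  finally show ?thesis
    unfolding X_def Y_def L2_set_pdom_pcomp by (simp add: mult_ac)
qed

section \<open>Lower bound\<close>

definition blk_tensor :: "nat \<Rightarrow> nat \<Rightarrow> (bool list \<Rightarrow> real) \<Rightarrow> bool list \<Rightarrow> real" where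
  "blk_tensor n m w s = (\<Prod>j<n. w (blk m s j))"

definition cross_form :: "nat \<Rightarrow> pbf \<Rightarrow> (bool list \<Rightarrow> real) \<Rightarrow> (bool list \<Rightarrow> real) \<Rightarrow> bool \<Rightarrow> real"
  where "cross_form m g u v c = (\<Sum>a\<in>val_set m g c. u a * sum v (sens_nbrs m g a))"

lemma adj_form_eq_sum_cross_form:
  "adj_form (pdom m g) (sens_edge m g) u v = (\<Sum>c\<in>UNIV. cross_form m g u v c)"
  unfolding adj_form_sens_edge cross_form_def val_set_eq
  by (rule sum.group[symmetric]) (simp_all add: finite_pdom)

lemma cross_form_eq:
  "cross_form m g u v c
     = (\<Sum>a\<in>val_set m g c. \<Sum>b\<in>val_set m g (\<not> c). if sens_edge m g a b then u a * v b else 0)"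
  unfolding cross_form_def sum_distrib_left
proof (rule sum.cong[OF refl])
  fix a assume "a \<in> val_set m g c"
  then have "sens_nbrs m g a = {b \<in> val_set m g (\<not> c). sens_edge m g a b}"
    using sens_edge_val_set[of a m g c] by (auto simp: val_set_def)
  then show "(\<Sum>b\<in>sens_nbrs m g a. u a * v b)
      = (\<Sum>b\<in>val_set m g (\<not> c). if sens_edge m g a b then u a * v b else 0)"
    by (simp add: sum.inter_filter finite_val_set)
qed

lemma cross_form_Not: "cross_form m g u v (\<not> c) = cross_form m g v u c"
  unfolding cross_form_eq
  by (subst sum.swap) (auto simp: sens_edge_sym[of m g] mult.commute intro!: sum.cong)

lemma cross_form_self_const: "cross_form m g w w c = cross_form m g w w c'"
  using cross_form_Not[of m g w w c] by (cases "c' = c") auto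

lemma blk_tensor_mult_sum_set_blk:
  assumes len: "length s = n * m" and i: "i < n"
  shows "blk_tensor n m w s * (\<Sum>b\<in>sens_nbrs m g (blk m s i). blk_tensor n m w (set_blk m i s b))
    = (\<Prod>j<n. if j = i then w (blk m s j) * sum w (sens_nbrs m g (blk m s j)) else (w (blk m s j))\<^sup>2)"
proof -
  have "blk_tensor n m w s * blk_tensor n m w (set_blk m i s b)
      = (\<Prod>j<n. if j = i then w (blk m s i) * w b else (w (blk m s j))\<^sup>2)"
    if "b \<in> sens_nbrs m g (blk m s i)" for b
  proof -
    have "length b = m"
      using that length_pdom by blast
    then have "blk m (set_blk m i s b) j = (if j = i then b else blk m s j)" if "j < n" for j
      using blk_set_blk[OF len i _ that] by simp
    then show ?thesis
      unfolding blk_tensor_def prod.distrib[symmetric]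
      by (intro prod.cong refl) (simp add: power2_eq_square)
  qed
  then have "blk_tensor n m w s * (\<Sum>b\<in>sens_nbrs m g (blk m s i). blk_tensor n m w (set_blk m i s b))
      = (\<Sum>b\<in>sens_nbrs m g (blk m s i).
           \<Prod>j<n. if j = i then w (blk m s i) * w b else (w (blk m s j))\<^sup>2)"
    by (simp add: sum_distrib_left)
  also have "\<dots> = (\<Prod>j<n. if j = i then (\<Sum>b\<in>sens_nbrs m g (blk m s i). w (blk m s i) * w b)
                       else (w (blk m s j))\<^sup>2)"
    by (rule sum_prod_if_eq) (simp_all add: i)
  finally show ?thesis
    by (simp add: sum_distrib_left cong: if_cong)
qed

lemma sum_blk_fiber_tensor:
  assumes w: "\<And>c. L2_set w (val_set m g c) = 1" and z: "length z = n" and i: "i < n"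
  shows "(\<Sum>s\<in>blk_fiber n m g z.
            blk_tensor n m w s * (\<Sum>b\<in>sens_nbrs m g (blk m s i). blk_tensor n m w (set_blk m i s b)))
         = cross_form m g w w c"
proof -
  define h where "h j a = (if j = i then w a * sum w (sens_nbrs m g a) else (w a)\<^sup>2)" for j a
  have "(\<Sum>s\<in>blk_fiber n m g z.
            blk_tensor n m w s * (\<Sum>b\<in>sens_nbrs m g (blk m s i). blk_tensor n m w (set_blk m i s b)))
      = (\<Sum>s\<in>blk_prod n m (\<lambda>j. val_set m g (z ! j)). \<Prod>j<n. h j (blk m s j))"
    unfolding blk_fiber_eq_blk_prod[OF z] h_def
    by (intro sum.cong refl) (simp add: blk_tensor_mult_sum_set_blk[OF _ i] blk_prod_def cong: if_cong)
  also have "\<dots> = (\<Prod>j<n. \<Sum>a\<in>val_set m g (z ! j). h j a)"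
    by (rule sum_blk_prod[OF length_val_set])
  also have "\<dots> = (\<Prod>j<n. if j = i then cross_form m g w w (z ! i) else 1)"
    using w by (intro prod.cong refl) (simp add: h_def cross_form_def L2_set_sq[symmetric])
  also have "\<dots> = cross_form m g w w c"
    using i cross_form_self_const by simp
  finally show ?thesis .
qed

lemma L2_set_pcomp_tensor:
  assumes w: "\<And>c. L2_set w (val_set m g c) = 1"
  shows "L2_set (\<lambda>s. p (blk_vals n m g s) * blk_tensor n m w s) (pdom (n * m) (pcomp n m f g))
    = L2_set p (pdom n f)"
  unfolding L2_set_pdom_pcomp
proof (rule L2_set_cong_power2)
  fix z assume "z \<in> pdom n f"
  then have z: "length z = n"
    by (rule length_pdom)
  have "(\<Sum>s\<in>blk_fiber n m g z. (p (blk_vals n m g s) * blk_tensor n m w s)\<^sup>2)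
      = (p z)\<^sup>2 * (\<Sum>s\<in>blk_prod n m (\<lambda>j. val_set m g (z ! j)). \<Prod>j<n. (w (blk m s j))\<^sup>2)"
    unfolding sum_distrib_left blk_fiber_eq_blk_prod[OF z, symmetric]
    by (intro sum.cong refl)
      (simp add: blk_fiber_def blk_tensor_def power_mult_distrib prod_power_distrib)
  also have "\<dots> = (p z)\<^sup>2"
    using w by (simp add: sum_blk_prod[OF length_val_set, where h = "\<lambda>j a. (w a)\<^sup>2"] L2_set_sq[symmetric])
  finally show "(L2_set (\<lambda>s. p (blk_vals n m g s) * blk_tensor n m w s) (blk_fiber n m g z))\<^sup>2 = (p z)\<^sup>2"
    by (simp add: L2_set_sq)
qed

lemma adj_form_pcomp_tensor:
  assumes w: "\<And>c. L2_set w (val_set m g c) = 1"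
  shows "adj_form (pdom (n * m) (pcomp n m f g)) (sens_edge (n * m) (pcomp n m f g))
           (\<lambda>s. p (blk_vals n m g s) * blk_tensor n m w s) (\<lambda>s. q (blk_vals n m g s) * blk_tensor n m w s)
         = cross_form m g w w c * adj_form (pdom n f) (sens_edge n f) p q"
proof -
  define T where "T s i = (\<Sum>b\<in>sens_nbrs m g (blk m s i). blk_tensor n m w (set_blk m i s b))" for s i
  have fiber: "p (blk_vals n m g s) * blk_tensor n m w s *
      (\<Sum>i\<in>sens_coords n f (blk_vals n m g s). \<Sum>b\<in>sens_nbrs m g (blk m s i).
         q (blk_vals n m g (set_blk m i s b)) * blk_tensor n m w (set_blk m i s b))
    = (\<Sum>i\<in>sens_coords n f z. p z * q (flip_at i z) * (blk_tensor n m w s * T s i))"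
    if "s \<in> blk_fiber n m g z" for s z
  proof -
    have len: "length s = n * m" and vals: "blk_vals n m g s = z"
      using that by (simp_all add: blk_fiber_def)
    have "q (blk_vals n m g (set_blk m i s b)) = q (flip_at i z)"
      if "i \<in> sens_coords n f z" "b \<in> sens_nbrs m g (blk m s i)" for i b
      using that blk_vals_set_blk_sens_edge[OF len] vals by (simp add: sens_coords_def)
    then show ?thesis
      unfolding vals T_def sum_distrib_left
      by (intro sum.cong refl) (simp add: mult_ac)
  qed
  have "adj_form (pdom (n * m) (pcomp n m f g)) (sens_edge (n * m) (pcomp n m f g))
           (\<lambda>s. p (blk_vals n m g s) * blk_tensor n m w s) (\<lambda>s. q (blk_vals n m g s) * blk_tensor n m w s)
      = (\<Sum>z\<in>pdom n f. \<Sum>s\<in>blk_fiber n m g z. \<Sum>i\<in>sens_coords n f z.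
           p z * q (flip_at i z) * (blk_tensor n m w s * T s i))"
    unfolding adj_form_pcomp sum_pdom_pcomp by (intro sum.cong refl fiber)
  also have "\<dots> = (\<Sum>z\<in>pdom n f. \<Sum>i\<in>sens_coords n f z.
           p z * q (flip_at i z) * (\<Sum>s\<in>blk_fiber n m g z. blk_tensor n m w s * T s i))"
    by (intro sum.cong refl) (simp add: sum.swap[of _ "blk_fiber n m g _"] sum_distrib_left)
  also have "\<dots> = (\<Sum>z\<in>pdom n f. \<Sum>i\<in>sens_coords n f z. p z * q (flip_at i z) * cross_form m g w w c)"
    unfolding T_def
    by (intro sum.cong refl) (simp add: sum_blk_fiber_tensor[OF w] length_pdom sens_coords_def)
  also have "\<dots> = cross_form m g w w c * adj_form (pdom n f) (sens_edge n f) p q"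
    unfolding adj_form_flip_at by (simp add: sum_distrib_left mult_ac)
  finally show ?thesis .
qed

lemma sens_lambda_mult_cross_form_self_le:
  assumes w: "\<And>c. L2_set w (val_set m g c) = 1"
  shows "sens_lambda n f * cross_form m g w w c \<le> sens_lambda (n * m) (pcomp n m f g)"
proof (cases "cross_form m g w w c > 0")
  case False
  then show ?thesis
    using sens_lambda_nonneg[of n f] sens_lambda_nonneg[of "n * m" "pcomp n m f g"]
    by (meson mult_nonneg_nonpos not_less order_trans)
next
  case True
  define L where "L = sens_lambda (n * m) (pcomp n m f g)"
  define \<beta> where "\<beta> = cross_form m g w w c"
  have "sens_lambda n f \<le> L / \<beta>"
  proof (rule sens_lambda_le)
    show "0 \<le> L / \<beta>"
      using True sens_lambda_nonneg unfolding L_def \<beta>_def by simp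
  next
    fix p q
    have "\<beta> * adj_form (pdom n f) (sens_edge n f) p q \<le> L * L2_set p (pdom n f) * L2_set q (pdom n f)"
      using adj_form_le_sens_lambda[of "n * m" "pcomp n m f g"
          "\<lambda>s. p (blk_vals n m g s) * blk_tensor n m w s" "\<lambda>s. q (blk_vals n m g s) * blk_tensor n m w s"]
      unfolding \<beta>_def L_def adj_form_pcomp_tensor[OF w, where c = c] L2_set_pcomp_tensor[OF w] .
    then show "adj_form (pdom n f) (sens_edge n f) p q \<le> L / \<beta> * L2_set p (pdom n f) * L2_set q (pdom n f)"
      using True unfolding \<beta>_def by (simp add: pos_le_divide_eq mult_ac)
  qed
  then show ?thesis
    using True unfolding L_def \<beta>_def by (simp add: pos_le_divide_eq mult.commute)
qed

lemma sens_lambda_mult_cross_form_le: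
  "sens_lambda n f * cross_form m g u v c
     \<le> sens_lambda (n * m) (pcomp n m f g) * L2_set u (val_set m g c) * L2_set v (val_set m g (\<not> c))"
proof -
  define \<alpha> where "\<alpha> = L2_set u (val_set m g c)"
  define \<delta> where "\<delta> = L2_set v (val_set m g (\<not> c))"
  show ?thesis
  proof (cases "\<alpha> = 0 \<or> \<delta> = 0")
    case True
    then have "u a = 0 \<or> v b = 0" if "a \<in> val_set m g c" "b \<in> sens_nbrs m g a" for a b
      using that sens_edge_val_set[of a m g c b] finite_val_set
      unfolding \<alpha>_def \<delta>_def by (auto simp: L2_set_eq_0_iff)
    then have "cross_form m g u v c = 0"
      unfolding cross_form_def by (auto simp: sum_distrib_left intro!: sum.neutral)
    then show ?thesis
      using sens_lambda_nonneg by (simp add: \<alpha>_def \<delta>_def)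
  next
    case False
    then have pos: "\<alpha> > 0" "\<delta> > 0"
      unfolding \<alpha>_def \<delta>_def using L2_set_nonneg by (metis less_eq_real_def)+
    define w where "w a = (if g a = Some c then u a / \<alpha> else v a / \<delta>)" for a
    have w_c: "w a = u a / \<alpha>" if "a \<in> val_set m g c" for a
      using that by (simp add: w_def val_set_def)
    have w_Not_c: "w a = v a / \<delta>" if "a \<in> val_set m g (\<not> c)" for a
      using that by (auto simp: w_def val_set_def)
    have "L2_set w (val_set m g c') = 1" for c'
    proof (cases "c' = c")
      case True
      then show ?thesis
        using L2_set_divide_self[of u "val_set m g c"] pos
        by (simp add: w_c \<alpha>_def cong: L2_set_cong)
    next
      case False
      then have "c' = (\<not> c)"
        by simp
      then show ?thesis
        using L2_set_divide_self[of v "val_set m g (\<not> c)"] pos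
        by (simp add: w_Not_c \<delta>_def cong: L2_set_cong)
    qed
    then have "sens_lambda n f * cross_form m g w w c \<le> sens_lambda (n * m) (pcomp n m f g)"
      by (rule sens_lambda_mult_cross_form_self_le)
    moreover have "cross_form m g w w c = cross_form m g u v c / (\<alpha> * \<delta>)"
      unfolding cross_form_def sum_divide_distrib
      using w_c w_Not_c sens_edge_val_set[of _ m g c]
      by (intro sum.cong refl) (auto simp: sum_divide_distrib[symmetric])
    ultimately show ?thesis
      using pos by (simp add: \<alpha>_def \<delta>_def pos_divide_le_eq mult_ac)
  qed
qed

lemma sens_lambda_mult_adj_form_le:
  "sens_lambda n f * adj_form (pdom m g) (sens_edge m g) u v
     \<le> sens_lambda (n * m) (pcomp n m f g) * L2_set u (pdom m g) * L2_set v (pdom m g)"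
proof -
  define L where "L = sens_lambda (n * m) (pcomp n m f g)"
  define U where "U c = L2_set u (val_set m g c)" for c
  define V where "V c = L2_set v (val_set m g (\<not> c))" for c
  have "sens_lambda n f * adj_form (pdom m g) (sens_edge m g) u v
      = (\<Sum>c\<in>UNIV. sens_lambda n f * cross_form m g u v c)"
    by (simp add: adj_form_eq_sum_cross_form sum_distrib_left)
  also have "\<dots> \<le> (\<Sum>c\<in>UNIV. L * (U c * V c))"
    unfolding L_def U_def V_def using sens_lambda_mult_cross_form_le
    by (intro sum_mono) (simp add: mult.assoc)
  also have "\<dots> \<le> L * (L2_set U UNIV * L2_set V UNIV)"
    unfolding sum_distrib_left[symmetric] L_def
    by (intro mult_left_mono sum_mult_le_L2_set sens_lambda_nonneg)
  also have "L2_set V UNIV = L2_set v (pdom m g)"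
    unfolding V_def L2_set_pdom_val_set[of v] by (simp add: UNIV_bool L2_set_def add.commute)
  finally show ?thesis
    by (simp add: U_def L2_set_pdom_val_set[of u] L_def mult_ac)
qed

theorem theoremA2:
  fixes n m :: nat and f g :: pbf
  shows "sens_lambda (n * m) (pcomp n m f g) = sens_lambda n f * sens_lambda m g"
proof (rule antisym)
  show "sens_lambda (n * m) (pcomp n m f g) \<le> sens_lambda n f * sens_lambda m g"
    by (rule sens_lambda_le) (simp_all add: sens_lambda_nonneg adj_form_pcomp_le)
next
  define L where "L = sens_lambda (n * m) (pcomp n m f g)"
  show "sens_lambda n f * sens_lambda m g \<le> L"
  proof (cases "sens_lambda n f = 0")
    case True
    then show ?thesis
      using sens_lambda_nonneg unfolding L_def by simp
  next
    case False
    then have pos: "sens_lambda n f > 0"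
      using sens_lambda_nonneg[of n f] by simp
    have "sens_lambda m g \<le> L / sens_lambda n f"
      using pos sens_lambda_mult_adj_form_le[of n f m g] sens_lambda_nonneg[of "n * m"]
      unfolding L_def by (intro sens_lambda_le) (simp_all add: pos_le_divide_eq mult_ac)
    then show ?thesis
      using pos by (simp add: pos_le_divide_eq mult.commute)
  qed
qed

end
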